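(* Let $\mathbb{K}\in\{\mathbb{Q},\mathbb{R},\mathbb{C}\}$, let $d\ge 0$ and $a$ be integers, and put $r:=-(a+d)$ (the degree). Let $H(t)=\sum_{i=0}^\infty \gamma_i (1-t)^{i-d}$, $\gamma_i\in\mathbb{K}$, be a formal Laurent series around $t=1$ of pole order at most $d$, and stipulate $\gamma_i=0$ for $i<0$. Then $H$ satisfies the functional equation $$H(t^{-1})=(-1)^d t^{-a}H(t)$$ if and only if the following conditions hold. If $r$ is even, then for each $m\ge 1$: $$\sum_{i=0}^{m-1}(-1)^i\binom{m-1}{i}\gamma_{m-r+i}=0. \qquad (\mathrm{A})$$ If $r>0$ is odd, then for each $m\ge 1$: $$\sum_{i=0}^{m}(-1)^i\binom{2m+r-2}{m-i}\binom{m+i}{i}\gamma_{m+i-1}=0. \qquad (\mathrm{B})$$ If $r<0$ (of either parity), then for each $1\le m\le \lceil -r/2\rceil$: $$\sum_{i=0}^{m}\binom{m}{i}\binom{1-r}{m+i}^{-1}\gamma_{m+i-1}=0, \qquad (\mathrm{C})$$ and moreover, if $r<0$ is odd, then for each $m\ge1$: $$\sum_{i=0}^{m}(-1)^i\binom{m}{i}\frac{m+i}{m}\gamma_{m-r+i}=0. \qquad (\mathrm{D})$$ (Thus for $r<0$ even the conditions are (A) for all $m\ge1$ together with (C); for $r<0$ odd they are (C) together with (D).)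
   Context: The functional equation is understood as an identity of formal Laurent series in $u=1-t$: one substitutes $t=1-u$, $t^{-1}=\sum_{j\ge0}u^j$, $1-t^{-1}=-u/(1-u)$, so that $H(t^{-1})=\sum_i\gamma_i\left(-u/(1-u)\right)^{i-d}$, and $t^{-a}=(1-u)^{-a}$ is expanded as a power series in $u$. *)

theory Defs
  imports Complex_Main "HOL-Computational_Algebra.Formal_Laurent_Series"
begin

text \<open>All series are formal Laurent series in the variable u = 1 - t.\<close>

definition H_ser :: "nat \<Rightarrow> (nat \<Rightarrow> 'a::field) \<Rightarrow> 'a fls" where
  "H_ser d \<gamma> = fls_X powi (- int d) * fps_to_fls (Abs_fps \<gamma>)"

text \<open>The substitution t -> t^(-1) in terms of u: u -> 1 - 1/(1-u) = -u/(1-u).\<close>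
definition u_inv_sub :: "'a::field fps" where
  "u_inv_sub = - fps_X * inverse (1 - fps_X)"

definition func_eq :: "nat \<Rightarrow> int \<Rightarrow> (nat \<Rightarrow> 'a::field) \<Rightarrow> bool" where
  "func_eq d a \<gamma> \<longleftrightarrow>
     fls_compose_fps (H_ser d \<gamma>) u_inv_sub
       = (-1) ^ d * (fps_to_fls (1 - fps_X)) powi (- a) * H_ser d \<gamma>"

definition gam :: "(nat \<Rightarrow> 'a::zero) \<Rightarrow> int \<Rightarrow> 'a" where
  "gam \<gamma> i = (if i < 0 then 0 else \<gamma> (nat i))"

definition condA :: "int \<Rightarrow> (nat \<Rightarrow> 'a::field) \<Rightarrow> nat \<Rightarrow> bool" where
  "condA r \<gamma> m \<longleftrightarrow>
     (\<Sum>i=0..m-1. (-1) ^ i * of_nat ((m-1) choose i) * gam \<gamma> (int m - r + int i)) = 0"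

definition condB :: "int \<Rightarrow> (nat \<Rightarrow> 'a::field) \<Rightarrow> nat \<Rightarrow> bool" where
  "condB r \<gamma> m \<longleftrightarrow>
     (\<Sum>i=0..m. (-1) ^ i * of_nat (nat (2 * int m + r - 2) choose (m - i))
        * of_nat ((m + i) choose i) * gam \<gamma> (int m + int i - 1)) = 0"

definition condC :: "int \<Rightarrow> (nat \<Rightarrow> 'a::field) \<Rightarrow> nat \<Rightarrow> bool" where
  "condC r \<gamma> m \<longleftrightarrow>
     (\<Sum>i=0..m. of_nat (m choose i) / of_nat (nat (1 - r) choose (m + i))
        * gam \<gamma> (int m + int i - 1)) = 0"

definition condD :: "int \<Rightarrow> (nat \<Rightarrow> 'a::field) \<Rightarrow> nat \<Rightarrow> bool" where
  "condD r \<gamma> m \<longleftrightarrow>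
     (\<Sum>i=0..m. (-1) ^ i * of_nat (m choose i) * (of_nat (m + i) / of_nat m)
        * gam \<gamma> (int m - r + int i)) = 0"

definition degree_conditions :: "nat \<Rightarrow> int \<Rightarrow> (nat \<Rightarrow> 'a::field) \<Rightarrow> bool" where
  "degree_conditions d a \<gamma> \<longleftrightarrow>
     (let r = - (a + int d) in
       (even r \<longrightarrow> (\<forall>m\<ge>1. condA r \<gamma> m)) \<and>
       (r > 0 \<and> odd r \<longrightarrow> (\<forall>m\<ge>1. condB r \<gamma> m)) \<and>
       (r < 0 \<longrightarrow> (\<forall>m. 1 \<le> m \<and> int m \<le> \<lceil>real_of_int (- r) / 2\<rceil> \<longrightarrow> condC r \<gamma> m)) \<and>
       (r < 0 \<and> odd r \<longrightarrow> (\<forall>m\<ge>1. condD r \<gamma> m)))"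

end

theory Submission
  imports Defs
begin

(* Write u = 1 - t and G = sum_i gamma_i u^i.  The functional equation says exactly that G is
   fixed by reflect r G = (1 - u)^(-r) G(-u/(1 - u)) with r = -(a + d); since -u/(1 - u) is
   its own compositional inverse, reflect r is an involution, and its matrix is lower
   triangular with diagonal entries (-1)^n.  Each of the conditions (A)-(D) is a linear
   functional L on the coefficients with L o reflect r = -L, so it vanishes on fixed points.
   Conversely, D = G - reflect r G satisfies reflect r D = -D and is killed by all these
   functionals: its even coefficients vanish by triangularity, and every odd coefficient n is
   the last one seen by some functional of (A)-(D), with nonzero weight there, so by induction
   D = 0. *)

section \<open>The involution behind the functional equation\<close>

definition one_minus_X_powi :: "int \<Rightarrow> 'a::field_char_0 fps" where
  "one_minus_X_powi e = Abs_fps (\<lambda>k. (-1)^k * (of_int e gchoose k))"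

lemma one_minus_X_powi_nth: "one_minus_X_powi e $ k = (-1)^k * (of_int e gchoose k)"
  by (simp add: one_minus_X_powi_def)

lemma one_minus_X_powi_add:
  "one_minus_X_powi (a + b) = (one_minus_X_powi a * one_minus_X_powi b :: 'a::field_char_0 fps)"
proof (rule fps_ext)
  fix n
  have "(one_minus_X_powi a * one_minus_X_powi b :: 'a fps) $ n
      = (\<Sum>i=0..n. (-1)^n * ((of_int a gchoose i) * (of_int b gchoose (n - i))))"
    by (simp add: fps_mult_nth one_minus_X_powi_nth mult_ac power_add[symmetric])
  also have "\<dots> = (-1)^n * ((of_int a + of_int b) gchoose n)"
    by (simp add: sum_distrib_left[symmetric] gbinomial_Vandermonde)
  finally show "one_minus_X_powi (a + b) $ n = (one_minus_X_powi a * one_minus_X_powi b :: 'a fps) $ n"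
    by (simp add: one_minus_X_powi_nth)
qed

lemma one_minus_X_powi_0 [simp]: "one_minus_X_powi 0 = 1"
proof (rule fps_ext)
  fix n show "one_minus_X_powi 0 $ n = (1::'a::field_char_0 fps) $ n"
    by (cases n) (simp_all add: one_minus_X_powi_nth)
qed

lemma one_minus_X_powi_1: "one_minus_X_powi 1 = (1 - fps_X :: 'a::field_char_0 fps)"
proof (rule fps_ext)
  fix n
  have "(1::'a) gchoose n = of_nat (1 choose n)"
    by (metis binomial_gbinomial of_nat_1)
  then show "one_minus_X_powi 1 $ n = (1 - fps_X :: 'a fps) $ n"
    by (cases "n \<ge> 2") (auto simp: one_minus_X_powi_nth not_le less_2_cases_iff)
qed

lemma one_minus_X_powi_inverse:
  "one_minus_X_powi a * one_minus_X_powi (-a) = (1 :: 'a::field_char_0 fps)"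
  using one_minus_X_powi_add[of a "-a"] by simp

lemma one_minus_X_powi_power:
  "one_minus_X_powi a ^ n = (one_minus_X_powi (a * int n) :: 'a::field_char_0 fps)"
  by (induction n) (simp_all add: one_minus_X_powi_add[symmetric] algebra_simps)

lemma u_inv_sub_eq: "u_inv_sub = (- fps_X * one_minus_X_powi (-1) :: 'a::field_char_0 fps)"
proof -
  have "one_minus_X_powi (-1) = inverse (1 - fps_X :: 'a fps)"
    using one_minus_X_powi_inverse[of 1]
    by (intro fps_inverse_unique[symmetric]) (simp add: one_minus_X_powi_1)
  then show ?thesis by (simp add: u_inv_sub_def)
qed

lemma u_inv_sub_nth_0 [simp]: "u_inv_sub $ 0 = (0::'a::field_char_0)"
  by (simp add: u_inv_sub_eq)

lemma u_inv_sub_power: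
  "u_inv_sub ^ j = (fps_const ((-1)^j) * (fps_X ^ j * one_minus_X_powi (- int j)) :: 'a::field_char_0 fps)"
proof -
  have "u_inv_sub ^ j = ((-1) * fps_X * one_minus_X_powi (-1) :: 'a fps) ^ j"
    by (simp add: u_inv_sub_eq)
  then show ?thesis
    by (simp only: power_mult_distrib one_minus_X_powi_power mult.assoc)
       (simp flip: fps_const_neg fps_const_power)
qed

lemma u_inv_sub_nonzero: "u_inv_sub \<noteq> (0::'a::field_char_0 fps)"
proof
  assume "u_inv_sub = (0::'a fps)"
  then have "(u_inv_sub * one_minus_X_powi 1 :: 'a fps) = 0" by simp
  moreover have "(u_inv_sub * one_minus_X_powi 1 :: 'a fps) = - fps_X"
    by (simp add: u_inv_sub_eq mult.assoc one_minus_X_powi_add[symmetric])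
  ultimately show False by simp
qed

lemma one_minus_X_powi_compose:
  "one_minus_X_powi a oo u_inv_sub = (one_minus_X_powi (-a) :: 'a::field_char_0 fps)"
proof -
  have one: "one_minus_X_powi 1 oo u_inv_sub = (one_minus_X_powi (-1) :: 'a fps)"
  proof -
    have "one_minus_X_powi 1 oo u_inv_sub = (1 - u_inv_sub :: 'a fps)"
      by (simp add: one_minus_X_powi_1 fps_compose_sub_distrib)
    also have "\<dots> = one_minus_X_powi (-1) * (one_minus_X_powi 1 + fps_X)"
      by (simp add: u_inv_sub_eq distrib_left one_minus_X_powi_inverse mult.commute)
    finally show ?thesis by (simp add: one_minus_X_powi_1)
  qed
  have nat_case: "one_minus_X_powi (int n) oo u_inv_sub = (one_minus_X_powi (- int n) :: 'a fps)" for n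
  proof -
    have "one_minus_X_powi (int n) oo u_inv_sub = ((one_minus_X_powi 1 oo u_inv_sub) ^ n :: 'a fps)"
      by (simp add: fps_compose_power one_minus_X_powi_power)
    also have "\<dots> = one_minus_X_powi (- int n)"
      by (simp add: one one_minus_X_powi_power)
    finally show ?thesis .
  qed
  show ?thesis
  proof (cases "a \<ge> 0")
    case True
    then show ?thesis using nat_case[of "nat a"] by simp
  next
    case False
    then have inv: "one_minus_X_powi (-a) oo u_inv_sub = (one_minus_X_powi a :: 'a fps)"
      using nat_case[of "nat (-a)"] by simp
    have "one_minus_X_powi a oo u_inv_sub
        = (one_minus_X_powi a oo u_inv_sub) * (one_minus_X_powi a * one_minus_X_powi (-a) :: 'a fps)"
      by (simp add: one_minus_X_powi_inverse)
    also have "\<dots> = ((one_minus_X_powi a * one_minus_X_powi (-a)) oo u_inv_sub) * one_minus_X_powi (-a)"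
      by (simp only: fps_compose_mult_distrib[OF u_inv_sub_nth_0] inv mult.assoc)
    also have "\<dots> = one_minus_X_powi (-a)"
      by (simp add: one_minus_X_powi_inverse)
    finally show ?thesis .
  qed
qed

lemma u_inv_sub_compose_self: "u_inv_sub oo u_inv_sub = (fps_X :: 'a::field_char_0 fps)"
proof -
  have "u_inv_sub oo u_inv_sub = - (u_inv_sub * (one_minus_X_powi (-1) oo u_inv_sub) :: 'a fps)"
    by (subst (1) u_inv_sub_eq) (simp add: fps_compose_mult_distrib fps_compose_uminus)
  also have "\<dots> = fps_X * (one_minus_X_powi (-1) * one_minus_X_powi 1)"
    by (simp only: one_minus_X_powi_compose) (simp add: u_inv_sub_eq)
  finally show ?thesis by (simp add: one_minus_X_powi_inverse mult.commute)
qed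

lemma u_inv_sub_power_mult_nth:
  assumes "j \<le> n"
  shows "(u_inv_sub ^ j * one_minus_X_powi e) $ n
           = (-1)^j * (of_int (int n - e - 1) gchoose (n - j) :: 'a::field_char_0)"
proof -
  have "u_inv_sub ^ j * one_minus_X_powi e
      = fps_const ((-1)^j) * (fps_X ^ j * one_minus_X_powi (e - int j) :: 'a fps)"
    by (simp add: u_inv_sub_power mult.assoc one_minus_X_powi_add[symmetric])
  then have "(u_inv_sub ^ j * one_minus_X_powi e) $ n
      = (-1)^j * ((-1)^(n-j) * ((of_int (e - int j) :: 'a) gchoose (n - j)))"
    using assms by (simp add: fps_X_power_mult_nth one_minus_X_powi_nth)
  also have "(of_int (e - int j) :: 'a) gchoose (n - j)
      = (-1)^(n-j) * (of_int (int n - e - 1) gchoose (n - j))"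
    using assms by (subst gbinomial_negated_upper) (simp add: of_nat_diff)
  finally show ?thesis by (simp add: mult.assoc[symmetric] power_add[symmetric])
qed

definition reflect :: "int \<Rightarrow> 'a::field_char_0 fps \<Rightarrow> 'a fps" where
  "reflect r G = one_minus_X_powi (-r) * (G oo u_inv_sub)"

lemma reflect_reflect: "reflect r (reflect r G) = G"
proof -
  have "reflect r (reflect r G)
      = one_minus_X_powi (-r) * ((one_minus_X_powi (-r) oo u_inv_sub) * ((G oo u_inv_sub) oo u_inv_sub))"
    by (simp add: reflect_def fps_compose_mult_distrib)
  also have "(G oo u_inv_sub) oo u_inv_sub = G"
    by (simp add: fps_compose_assoc[symmetric] u_inv_sub_compose_self)
  finally show ?thesis
    using one_minus_X_powi_inverse[of "-r", where 'a='a]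
    by (simp add: one_minus_X_powi_compose mult.assoc[symmetric])
qed

lemma reflect_diff: "reflect r (G - H) = reflect r G - reflect r H"
  by (simp add: reflect_def fps_compose_sub_distrib algebra_simps)

lemma reflect_nth:
  "reflect r G $ n = (\<Sum>j=0..n. (-1)^j * (of_int (int n + r - 1) gchoose (n - j)) * G $ j)"
proof -
  have compose_nth: "(G oo u_inv_sub) $ i = (\<Sum>j=0..n. G $ j * (u_inv_sub ^ j) $ i)"
    if "i \<le> n" for i
  proof -
    have "(u_inv_sub ^ j :: 'a fps) $ i = 0" if "i < j" for j
      using that by (simp add: u_inv_sub_power fps_X_power_mult_nth)
    then show ?thesis
      using \<open>i \<le> n\<close> unfolding fps_compose_nth by (intro sum.mono_neutral_left) auto
  qed
  have "reflect r G $ n = (\<Sum>i=0..n. \<Sum>j=0..n. G $ j * (u_inv_sub ^ j) $ i * one_minus_X_powi (-r) $ (n - i))"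
    by (simp add: reflect_def mult.commute[of "one_minus_X_powi _"] fps_mult_nth compose_nth
          sum_distrib_right)
  also have "\<dots> = (\<Sum>j=0..n. G $ j * (u_inv_sub ^ j * one_minus_X_powi (-r)) $ n)"
    by (subst sum.swap) (simp add: fps_mult_nth sum_distrib_left mult.assoc)
  also have "\<dots> = (\<Sum>j=0..n. (-1)^j * (of_int (int n + r - 1) gchoose (n - j)) * G $ j)"
    by (intro sum.cong refl) (simp add: u_inv_sub_power_mult_nth)
  finally show ?thesis .
qed

lemma fps_to_fls_one_minus_X_powi_powi:
  "fps_to_fls (one_minus_X_powi a) powi k = (fps_to_fls (one_minus_X_powi (a * k)) :: 'a::field_char_0 fls)"
proof -
  have power: "fps_to_fls (one_minus_X_powi a) ^ n = (fps_to_fls (one_minus_X_powi (a * int n)) :: 'a fls)"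
    for a n by (simp add: one_minus_X_powi_power flip: fps_to_fls_power)
  have inverse: "inverse (fps_to_fls (one_minus_X_powi a)) = (fps_to_fls (one_minus_X_powi (-a)) :: 'a fls)"
    for a by (rule inverse_unique)
      (simp add: fls_times_fps_to_fls one_minus_X_powi_inverse flip: fls_times_fps_to_fls)
  show ?thesis
  proof (cases "k \<ge> 0")
    case True
    then show ?thesis using power[of a "nat k"] by (simp add: power_int_def)
  next
    case False
    then show ?thesis using power[of "-a" "nat (-k)"]
      by (simp add: power_int_def inverse flip: power_inverse)
  qed
qed

lemma H_ser_compose_u_inv_sub:
  fixes \<gamma> :: "nat \<Rightarrow> 'a::field_char_0"
  shows "fls_compose_fps (H_ser d \<gamma>) u_inv_sub
    = (-1)^d * fls_X powi (- int d) * fps_to_fls (one_minus_X_powi (int d) * (Abs_fps \<gamma> oo u_inv_sub))"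
proof -
  have "fls_compose_fps (H_ser d \<gamma>) u_inv_sub
      = fls_compose_fps (fls_X powi (- int d)) u_inv_sub * fls_compose_fps (fps_to_fls (Abs_fps \<gamma>)) u_inv_sub"
    unfolding H_ser_def by (rule fls_compose_fps_mult) (simp_all add: u_inv_sub_nonzero)
  also have "\<dots> = fps_to_fls u_inv_sub powi (- int d) * fps_to_fls (Abs_fps \<gamma> oo u_inv_sub)"
    by (subst fls_compose_fps_powi) (simp_all add: u_inv_sub_nonzero)
  also have "fps_to_fls u_inv_sub = (-1) * fls_X * (fps_to_fls (one_minus_X_powi (-1)) :: 'a fls)"
    by (simp add: u_inv_sub_eq fls_times_fps_to_fls)
  also have "((-1) * fls_X * fps_to_fls (one_minus_X_powi (-1))) powi (- int d)
      = (-1) powi (- int d) * fls_X powi (- int d) * (fps_to_fls (one_minus_X_powi (int d)) :: 'a fls)"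
    by (simp only: power_int_mult_distrib fps_to_fls_one_minus_X_powi_powi) simp
  also have "(-1 :: 'a fls) powi (- int d) = (-1)^d"
    by (simp add: power_int_minus flip: power_inverse)
  finally show ?thesis by (simp add: fls_times_fps_to_fls mult.assoc)
qed

lemma func_eq_iff_reflect:
  fixes \<gamma> :: "nat \<Rightarrow> 'a::field_char_0"
  shows "func_eq d a \<gamma> \<longleftrightarrow> reflect (- (a + int d)) (Abs_fps \<gamma>) = Abs_fps \<gamma>"
proof -
  define c :: "'a fls" where "c = (-1)^d * fls_X powi (- int d)"
  have "c \<noteq> 0" by (simp add: c_def fls_shift_eq0_iff)
  have rhs: "(-1) ^ d * fps_to_fls (1 - fps_X) powi (- a) * H_ser d \<gamma>
      = c * fps_to_fls (one_minus_X_powi (-a) * Abs_fps \<gamma>)"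
    by (simp add: c_def H_ser_def fps_to_fls_one_minus_X_powi_powi fls_times_fps_to_fls mult_ac
          flip: one_minus_X_powi_1)
  have "func_eq d a \<gamma> \<longleftrightarrow> one_minus_X_powi (int d) * (Abs_fps \<gamma> oo u_inv_sub)
      = one_minus_X_powi (-a) * Abs_fps \<gamma>"
    unfolding func_eq_def H_ser_compose_u_inv_sub rhs c_def[symmetric] using \<open>c \<noteq> 0\<close> by simp
  also have "\<dots> \<longleftrightarrow> one_minus_X_powi a * (one_minus_X_powi (int d) * (Abs_fps \<gamma> oo u_inv_sub))
      = Abs_fps \<gamma>"
    using one_minus_X_powi_inverse[of a, where 'a='a] one_minus_X_powi_inverse[of "-a", where 'a='a]
    by (metis (no_types, lifting) minus_minus mult.assoc mult.left_neutral)
  also have "\<dots> \<longleftrightarrow> reflect (- (a + int d)) (Abs_fps \<gamma>) = Abs_fps \<gamma>"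
    by (simp add: reflect_def mult.assoc[symmetric] one_minus_X_powi_add[symmetric] add.commute)
  finally show ?thesis .
qed

section \<open>Anti-invariant windows\<close>

definition binom_int :: "int \<Rightarrow> int \<Rightarrow> 'a::field_char_0" where
  "binom_int x k = (if k < 0 then 0 else of_int x gchoose nat k)"

definition window_sum :: "int \<Rightarrow> nat \<Rightarrow> (nat \<Rightarrow> 'a) \<Rightarrow> 'a::field_char_0 fps \<Rightarrow> 'a" where
  "window_sum b l w G = (\<Sum>i=0..l. w i * gam (\<lambda>k. G $ k) (b + int i))"

definition window_coeff :: "int \<Rightarrow> nat \<Rightarrow> (nat \<Rightarrow> 'a::zero) \<Rightarrow> nat \<Rightarrow> 'a" where
  "window_coeff b l w j = (if b \<le> int j \<and> int j \<le> b + int l then w (nat (int j - b)) else 0)"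

(* The coefficientwise form of  window_sum b l w (reflect r G) = - window_sum b l w G :
   pairing the weights with column j of the matrix of reflect r gives minus the j-th weight. *)
definition anti_window :: "int \<Rightarrow> int \<Rightarrow> nat \<Rightarrow> (nat \<Rightarrow> 'a::field_char_0) \<Rightarrow> bool" where
  "anti_window r b l w \<longleftrightarrow> (\<forall>j.
     (-1)^j * (\<Sum>i=0..l. w i * binom_int (b + int i + r - 1) (b + int i - int j)) = - window_coeff b l w j)"

lemma gam_reflect:
  assumes "x \<le> int J"
  shows "gam (\<lambda>k. reflect r G $ k) x = (\<Sum>j=0..J. (-1)^j * binom_int (x + r - 1) (x - int j) * G $ j)"
proof (cases "x < 0")
  case True
  then show ?thesis by (simp add: gam_def binom_int_def)
next
  case False
  define n where "n = nat x"
  have x: "x = int n" and "n \<le> J" using False assms by (simp_all add: n_def)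
  have "gam (\<lambda>k. reflect r G $ k) x = (\<Sum>j=0..n. (-1)^j * binom_int (x + r - 1) (x - int j) * G $ j)"
    by (auto simp: gam_def x reflect_nth binom_int_def nat_diff_distrib intro!: sum.cong)
  also have "\<dots> = (\<Sum>j=0..J. (-1)^j * binom_int (x + r - 1) (x - int j) * G $ j)"
    using \<open>n \<le> J\<close> by (intro sum.mono_neutral_left) (auto simp: binom_int_def x)
  finally show ?thesis .
qed

lemma window_sum_eq_coeff_sum:
  assumes "b + int l \<le> int J"
  shows "window_sum b l w G = (\<Sum>j=0..J. window_coeff b l w j * G $ j)"
proof -
  have "(\<Sum>j=0..J. window_coeff b l w j * G $ j)
      = (\<Sum>j\<in>{j\<in>{0..J}. b \<le> int j \<and> int j \<le> b + int l}. w (nat (int j - b)) * G $ j)"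
    unfolding sum.inter_filter[OF finite_atLeastAtMost] window_coeff_def by (rule sum.cong) auto
  also have "\<dots> = (\<Sum>i\<in>{i\<in>{0..l}. 0 \<le> b + int i}. w i * G $ nat (b + int i))"
    using assms
    by (intro sum.reindex_bij_witness[where j="\<lambda>j. nat (int j - b)" and i="\<lambda>i. nat (b + int i)"]) auto
  also have "\<dots> = window_sum b l w G"
    unfolding window_sum_def sum.inter_filter[OF finite_atLeastAtMost] by (rule sum.cong) (auto simp: gam_def)
  finally show ?thesis ..
qed

lemma window_sum_reflect:
  assumes "anti_window r b l w"
  shows "window_sum b l w (reflect r G) = - window_sum b l w G"
proof -
  define J where "J = nat (b + int l)"
  have J: "b + int l \<le> int J" by (simp add: J_def)
  have "window_sum b l w (reflect r G)
     = (\<Sum>i=0..l. \<Sum>j=0..J. w i * ((-1)^j * binom_int (b + int i + r - 1) (b + int i - int j) * G $ j))"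
    unfolding window_sum_def using J
    by (intro sum.cong refl) (subst gam_reflect[of _ J]; simp add: sum_distrib_left)
  also have "\<dots> = (\<Sum>j=0..J. ((-1)^j * (\<Sum>i=0..l. w i * binom_int (b + int i + r - 1) (b + int i - int j))) * G $ j)"
    by (subst sum.swap) (simp add: sum_distrib_left sum_distrib_right mult_ac)
  also have "\<dots> = - window_sum b l w G"
    using assms unfolding anti_window_def window_sum_eq_coeff_sum[OF J]
    by (simp add: sum_negf[symmetric])
  finally show ?thesis .
qed

lemma window_sum_diff: "window_sum b l w (F - G) = window_sum b l w F - window_sum b l w G"
  unfolding window_sum_def sum_subtractf[symmetric] by (rule sum.cong) (auto simp: gam_def algebra_simps)

lemma window_sum_top:
  assumes "\<And>k. k < n \<Longrightarrow> G $ k = 0" and "b + int l = int n"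
  shows "window_sum b l w G = w l * G $ n"
proof -
  have "window_sum b l w G = (\<Sum>i\<in>insert l {0..<l}. w i * gam (\<lambda>k. G $ k) (b + int i))"
    unfolding window_sum_def by (rule sum.cong) auto
  also have "\<dots> = w l * gam (\<lambda>k. G $ k) (b + int l)"
    using assms by (auto simp: gam_def intro!: sum.neutral)
  finally show ?thesis using assms(2) by (simp add: gam_def)
qed

lemma self_neg_eq_0: "(x :: 'a::field_char_0) = - x \<Longrightarrow> x = 0"
  by (simp add: eq_neg_iff_add_eq_0 flip: mult_2)

lemma reflect_antifixed_eq_0:
  fixes P :: "int \<Rightarrow> nat \<Rightarrow> (nat \<Rightarrow> 'a::field_char_0) \<Rightarrow> bool"
  assumes antifixed: "reflect r D = - D"
    and windows: "\<And>b l w. P b l w \<Longrightarrow> window_sum b l w D = 0"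
    and cover: "\<And>n. odd n \<Longrightarrow> \<exists>b l w. P b l w \<and> b + int l = int n \<and> w l \<noteq> 0"
  shows "D = 0"
proof (rule fps_ext)
  fix n show "D $ n = 0 $ n"
  proof (induction n rule: less_induct)
    case (less n)
    then have lower: "D $ k = 0" if "k < n" for k
      using that by simp
    show ?case
    proof (cases "even n")
      case True
      have "reflect r D $ n = (\<Sum>j\<in>insert n {0..<n}. (-1)^j * (of_int (int n + r - 1) gchoose (n - j)) * D $ j)"
        unfolding reflect_nth by (rule sum.cong) auto
      also have "\<dots> = D $ n"
        using lower True by simp
      finally show ?thesis
        using antifixed by (simp add: self_neg_eq_0)
    next
      case False
      then obtain b l w where "P b l w" "b + int l = int n" "w l \<noteq> 0"
        using cover by blast
      with lower windows show ?thesis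
        using window_sum_top[of n D b l w] by simp
    qed
  qed
qed

lemma reflect_fixed_iff_windows:
  fixes P :: "int \<Rightarrow> nat \<Rightarrow> (nat \<Rightarrow> 'a::field_char_0) \<Rightarrow> bool"
  assumes anti: "\<And>b l w. P b l w \<Longrightarrow> anti_window r b l w"
    and cover: "\<And>n. odd n \<Longrightarrow> \<exists>b l w. P b l w \<and> b + int l = int n \<and> w l \<noteq> 0"
  shows "reflect r G = G \<longleftrightarrow> (\<forall>b l w. P b l w \<longrightarrow> window_sum b l w G = 0)"
proof
  assume "reflect r G = G"
  then show "\<forall>b l w. P b l w \<longrightarrow> window_sum b l w G = 0"
    using window_sum_reflect[OF anti] by (metis self_neg_eq_0)
next
  assume windows: "\<forall>b l w. P b l w \<longrightarrow> window_sum b l w G = 0"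
  have "reflect r (G - reflect r G) = - (G - reflect r G)"
    by (simp add: reflect_diff reflect_reflect)
  moreover have "window_sum b l w (G - reflect r G) = 0" if "P b l w" for b l w
    using that windows by (simp add: window_sum_diff window_sum_reflect[OF anti])
  ultimately have "G - reflect r G = 0"
    using cover by (rule reflect_antifixed_eq_0)
  then show "reflect r G = G" by simp
qed

section \<open>Alternating binomial sums\<close>

lemma binom_int_of_nat [simp]: "binom_int (int n) (int k) = (of_nat (n choose k) :: 'a::field_char_0)"
  by (simp add: binom_int_def binomial_gbinomial)

lemma binom_int_0 [simp]: "binom_int x 0 = (1::'a::field_char_0)"
  by (simp add: binom_int_def)

lemma binom_int_neg [simp]: "k < 0 \<Longrightarrow> binom_int x k = 0"
  by (simp add: binom_int_def)

lemma binom_int_of_nat_above: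
  assumes "int n < k"
  shows "binom_int (int n) k = (0::'a::field_char_0)"
proof -
  define t where "t = nat k"
  have "k = int t" "n < t" using assms by (simp_all add: t_def)
  then show ?thesis by (simp add: binomial_eq_0)
qed

lemma binom_int_symmetric:
  "binom_int (int n) k = (binom_int (int n) (int n - k) :: 'a::field_char_0)"
proof -
  consider "k < 0" | "k > int n" | "0 \<le> k" "k \<le> int n"
    by linarith
  then show ?thesis
  proof cases
    case 1
    then show ?thesis by (simp add: binom_int_of_nat_above)
  next
    case 2
    then show ?thesis by (simp add: binom_int_of_nat_above)
  next
    case 3
    define t where "t = nat k"
    have k: "k = int t" and "t \<le> n" using 3 by (simp_all add: t_def)
    then have "int n - k = int (n - t)" by simp
    then have "binom_int (int n) (int n - k) = (of_nat (n choose (n - t)) :: 'a)"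
      by (simp only: binom_int_of_nat)
    moreover have "binom_int (int n) k = (of_nat (n choose t) :: 'a)"
      by (simp only: k binom_int_of_nat)
    ultimately show ?thesis by (simp only: binomial_symmetric[OF \<open>t \<le> n\<close>])
  qed
qed

lemma binom_int_pascal:
  "binom_int (x + 1) k = binom_int x k + (binom_int x (k - 1) :: 'a::field_char_0)"
proof (cases "k \<le> 0")
  case True
  then show ?thesis by (cases "k = 0") (auto simp: binom_int_def)
next
  case False
  then have "nat k = Suc (nat (k - 1))" by simp
  with False show ?thesis
    using gbinomial_Suc_Suc[of "of_int x :: 'a" "nat (k - 1)"] by (simp add: binom_int_def add.commute)
qed

lemma binom_int_alternating_sum:
  "(\<Sum>i=0..p. (-1)^i * of_nat (p choose i) * binom_int (x + int i) y)
     = (-1)^p * (binom_int x (y - int p) :: 'a::field_char_0)"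
proof (induction p arbitrary: x y)
  case 0
  then show ?case by simp
next
  case (Suc p)
  define f where "f x i = (-1)^i * of_nat (p choose i) * (binom_int (x + int i) y :: 'a)" for x i
  have split: "(-1)^i * of_nat (Suc p choose i) * binom_int (x + int i) y
      = f x i + (if i = 0 then 0 else - f (x + 1) (i - 1))" for i
    by (cases i) (simp_all add: f_def algebra_simps)
  have "(\<Sum>i=0..Suc p. (if i = 0 then 0 else - f (x + 1) (i - 1))) = - (\<Sum>i=0..p. f (x + 1) i)"
    by (subst sum.atLeast0_atMost_Suc_shift) (simp add: sum_negf)
  moreover have "(\<Sum>i=0..Suc p. f x i) = (\<Sum>i=0..p. f x i)"
    by (simp add: f_def)
  ultimately have "(\<Sum>i=0..Suc p. (-1)^i * of_nat (Suc p choose i) * (binom_int (x + int i) y :: 'a))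
      = (\<Sum>i=0..p. f x i) - (\<Sum>i=0..p. f (x + 1) i)"
    by (simp only: split sum.distrib) simp
  also have "\<dots> = (-1)^p * (binom_int x (y - int p) - binom_int (x + 1) (y - int p))"
    using Suc.IH by (simp add: f_def right_diff_distrib)
  also have "\<dots> = (-1)^Suc p * binom_int x (y - int (Suc p))"
    unfolding binom_int_pascal by (simp add: algebra_simps)
  finally show ?case .
qed

lemma binom_int_alternating_diag_sum:
  "(\<Sum>i=0..p. (-1)^i * of_nat (p choose i) * binom_int (int n + int i) (k + int i))
     = (-1)^p * (binom_int (int n) (int n - k - int p) :: 'a::field_char_0)"
proof -
  have "binom_int (int n + int i) (k + int i) = (binom_int (int n + int i) (int n - k) :: 'a)" for i
    using binom_int_symmetric[of "n + i" "k + int i"] by simp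
  then show ?thesis
    using binom_int_alternating_sum[of p "int n" "int n - k"] by simp
qed

section \<open>Column sums of the weights of (A)-(D)\<close>

lemma minus_one_power_mult_odd:
  "odd (a + b + c) \<Longrightarrow> (-1::'a::ring_1)^a * ((-1)^b * x) = - ((-1)^c * x)"
  by (auto simp: minus_one_power_iff)

lemma anti_windowI:
  fixes w :: "nat \<Rightarrow> 'a::field_char_0"
  assumes below: "\<And>j. int j < b \<Longrightarrow>
      (\<Sum>i=0..l. w i * binom_int (b + int i + r - 1) (b + int i - int j)) = 0"
    and above: "\<And>j k. int j = b + int k \<Longrightarrow>
      (-1)^j * (\<Sum>i=0..l. w i * binom_int (b + int i + r - 1) (b + int i - int j))
        = - (if k \<le> l then w k else 0)"
  shows "anti_window r b l w"
  unfolding anti_window_def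
proof
  fix j
  show "(-1)^j * (\<Sum>i=0..l. w i * binom_int (b + int i + r - 1) (b + int i - int j))
      = - window_coeff b l w j"
  proof (cases "int j < b")
    case True
    then show ?thesis by (simp add: below window_coeff_def)
  next
    case False
    then have "int j = b + int (nat (int j - b))" by simp
    from above[OF this] False show ?thesis by (auto simp: window_coeff_def nat_le_iff)
  qed
qed

lemma column_sum_condA:
  assumes "b + r = int (Suc p)"
  shows "(\<Sum>i=0..p. (-1)^i * of_nat (p choose i) * binom_int (b + int i + r - 1) (b + int i - int j))
    = (-1)^p * (binom_int (int p) (int j - b) :: 'a::field_char_0)"
proof -
  have upper: "b + int i + r - 1 = int p + int i" and lower: "b + int i - int j = b - int j + int i"
    for i using assms by simp_all
  show ?thesis
    unfolding upper lower using binom_int_alternating_diag_sum[of p p "b - int j", where 'a='a] by simp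
qed

lemma anti_window_condA:
  assumes "even r" and "m \<ge> 1"
  shows "anti_window r (int m - r) (m - 1) (\<lambda>i. (-1)^i * of_nat ((m - 1) choose i) :: 'a::field_char_0)"
proof -
  obtain p where m: "m = Suc p" using \<open>m \<ge> 1\<close> by (cases m) auto
  show ?thesis
    unfolding m diff_Suc_1
  proof (rule anti_windowI, goal_cases below above)
    case (below j)
    then show ?case unfolding column_sum_condA[OF diff_add_cancel] by simp
  next
    case (above j k)
    then have "odd (j + p + k)" using \<open>even r\<close> by presburger
    then have sign: "(-1::'a)^j * ((-1)^p * x) = - ((-1)^k * x)" for x
      by (rule minus_one_power_mult_odd)
    show ?case
      unfolding column_sum_condA[OF diff_add_cancel] sign using above by (auto simp: binomial_eq_0)
  qed
qed

lemma binomial_mult_add_div: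
  "of_nat (Suc n choose i) * (of_nat (Suc n + i) / of_nat (Suc n))
     = of_nat (Suc n choose i) + (if i = 0 then 0 else of_nat (n choose (i - 1)) :: 'a::field_char_0)"
proof (cases i)
  case (Suc k)
  have "of_nat (Suc n choose Suc k) * of_nat (Suc k) = (of_nat (Suc n) * of_nat (n choose k) :: 'a)"
    by (metis Suc_times_binomial of_nat_mult mult.commute)
  then have "of_nat (Suc n choose Suc k) * of_nat (Suc n + Suc k)
      = of_nat (Suc n) * (of_nat (Suc n choose Suc k) + of_nat (n choose k) :: 'a)"
    by (simp only: of_nat_add distrib_left) (simp add: mult.commute)
  then show ?thesis
    using Suc by (simp add: field_simps del: binomial_Suc_Suc of_nat_Suc)
qed (simp del: of_nat_Suc)

lemma binom_int_minus_one:
  "binom_int (int n) (int k - 1) = (if k = 0 then 0 else of_nat (n choose (k - 1)) :: 'a::field_char_0)"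
  by (cases k) simp_all

lemma column_sum_condD:
  assumes "b + r = int (Suc n)"
  shows "(\<Sum>i=0..Suc n. (-1)^i * of_nat (Suc n choose i) * (of_nat (Suc n + i) / of_nat (Suc n))
      * binom_int (b + int i + r - 1) (b + int i - int j))
    = (-1)^Suc n * (binom_int (int n) (int j - 1 - b) + binom_int (int (Suc n)) (int j - b) :: 'a::field_char_0)"
proof -
  define B where "B i = (binom_int (int n + int i) (b - int j + int i) :: 'a)" for i
  have upper: "b + int i + r - 1 = int n + int i" and lower: "b + int i - int j = b - int j + int i"
    for i using assms by simp_all
  have weight: "(-1)^i * of_nat (Suc n choose i) * (of_nat (Suc n + i) / of_nat (Suc n)) * B i
      = (-1)^i * of_nat (Suc n choose i) * B i + (if i = 0 then 0 else (-1)^i * of_nat (n choose (i - 1)) * B i)"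
    for i
  proof -
    have "(-1)^i * of_nat (Suc n choose i) * (of_nat (Suc n + i) / of_nat (Suc n)) * B i
        = (-1)^i * B i * (of_nat (Suc n choose i) * (of_nat (Suc n + i) / of_nat (Suc n)))"
      by (simp only: mult_ac)
    then show ?thesis
      by (simp only: binomial_mult_add_div) (cases "i = 0"; simp add: algebra_simps)
  qed
  have first: "(\<Sum>i=0..Suc n. (-1)^i * of_nat (Suc n choose i) * B i)
      = (-1)^Suc n * binom_int (int n) (int j - 1 - b)"
    using binom_int_alternating_diag_sum[of "Suc n" n "b - int j", where 'a='a] by (simp add: B_def)
  have second: "(\<Sum>i=0..Suc n. (if i = 0 then 0 else (-1)^i * of_nat (n choose (i - 1)) * B i))
      = (-1)^Suc n * binom_int (int (Suc n)) (int j - b)"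
    using binom_int_alternating_diag_sum[of n "Suc n" "b - int j + 1", where 'a='a]
    by (subst sum.atLeast0_atMost_Suc_shift) (simp add: B_def sum_negf algebra_simps)
  show ?thesis
    unfolding upper lower B_def[symmetric] weight sum.distrib first second by (simp add: algebra_simps)
qed

lemma anti_window_condD:
  assumes "odd r" and "m \<ge> 1"
  shows "anti_window r (int m - r) m
    (\<lambda>i. (-1)^i * of_nat (m choose i) * (of_nat (m + i) / of_nat m) :: 'a::field_char_0)"
proof -
  obtain n where m: "m = Suc n" using \<open>m \<ge> 1\<close> by (cases m) auto
  show ?thesis
    unfolding m
  proof (rule anti_windowI, goal_cases below above)
    case (below j)
    then show ?case unfolding column_sum_condD[OF diff_add_cancel] by simp
  next
    case (above j k)
    then have "odd (j + Suc n + k)" using \<open>odd r\<close> by presburger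
    then have sign: "(-1::'a)^j * ((-1)^Suc n * x) = - ((-1)^k * x)" for x
      by (rule minus_one_power_mult_odd)
    show ?case
      unfolding column_sum_condD[OF diff_add_cancel] unfolding mult.assoc binomial_mult_add_div sign
      using above by (auto simp: binomial_eq_0 binom_int_minus_one simp del: of_nat_Suc)
  qed
qed

lemma binomial_product_condB:
  assumes "i + s + i = Suc j + e"
  shows "of_nat ((s + e + j + R) choose s) * of_nat ((i + s + i) choose i) * of_nat ((e + j + R) choose e)
    = fact (s + e + j + R) * fact (Suc j) / (fact (R + j) * fact (i + s) * fact (i + s))
      * of_nat ((i + s) choose i) * (of_nat ((Suc j + e) choose Suc j) :: 'a::field_char_0)"
proof -
  have b1: "of_nat ((s + e + j + R) choose s) = (fact (s + e + j + R) / (fact s * fact (e + j + R)) :: 'a)"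
    by (subst binomial_fact) (simp_all add: add.assoc)
  have b2: "of_nat ((i + s + i) choose i) = (fact (Suc j + e) / (fact i * fact (i + s)) :: 'a)"
  proof -
    have "i + s + i - i = i + s" by simp
    then show ?thesis by (subst binomial_fact) (simp_all only: assms le_add2)
  qed
  have b3: "of_nat ((e + j + R) choose e) = (fact (e + j + R) / (fact e * fact (R + j)) :: 'a)"
    by (subst binomial_fact) (simp_all add: add.commute add.left_commute)
  have b4: "of_nat ((i + s) choose i) = (fact (i + s) / (fact i * fact s) :: 'a)"
    by (subst binomial_fact) simp_all
  have b5: "of_nat ((Suc j + e) choose Suc j) = (fact (Suc j + e) / (fact (Suc j) * fact e) :: 'a)"
    by (subst binomial_fact) simp_all
  show ?thesis
    unfolding b1 b2 b3 b4 b5 by (simp add: field_simps del: fact_Suc)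
qed

(* Up to a factor depending only on j, the i-th term is C(m,i) C(m+i,j+1), so the column sum
   collapses by binom_int_alternating_sum; the same happens for (C). *)
lemma column_term_condB:
  assumes "i \<le> m"
  shows "of_nat ((2 * m + R - 1) choose (m - i)) * of_nat ((m + i) choose i)
      * binom_int (int (m + i + R) - 1) (int (m + i) - 1 - int j)
    = fact (2 * m + R - 1) * fact (Suc j) / (fact (R + j) * fact m * fact m)
      * of_nat (m choose i) * (binom_int (int (m + i)) (int (Suc j)) :: 'a::field_char_0)"
proof (cases "Suc j \<le> m + i")
  case False
  then show ?thesis by (simp add: binomial_eq_0 del: of_nat_add of_nat_Suc)
next
  case True
  define s e where "s = m - i" and "e = m + i - Suc j"
  have m: "m = i + s" and mi: "i + s + i = Suc j + e"
    using assms True by (simp_all add: s_def e_def)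
  have "2 * m + R - 1 = s + e + j + R" and "m - i = s" and "m + i = Suc j + e"
    and "int (Suc j + e + R) - 1 = int (e + j + R)" and "int (Suc j + e) - 1 - int j = int e"
    using m mi by simp_all
  then show ?thesis
    using binomial_product_condB[OF mi, of R, unfolded mi m[symmetric], where 'a='a]
    by (simp only: binom_int_of_nat)
qed

lemma column_sum_condB:
  assumes "b + 1 = int m" and "r = int R + 1"
  shows "(\<Sum>i=0..m. (-1)^i * of_nat ((2 * m + R - 1) choose (m - i)) * of_nat ((m + i) choose i)
      * binom_int (b + int i + r - 1) (b + int i - int j))
    = fact (2 * m + R - 1) * fact (Suc j) / (fact (R + j) * fact m * fact m)
      * ((-1)^m * (binom_int (int m) (1 + int j - int m) :: 'a::field_char_0))"
proof -
  define K :: 'a where "K = fact (2 * m + R - 1) * fact (Suc j) / (fact (R + j) * fact m * fact m)"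
  have upper: "b + int i + r - 1 = int (m + i + R) - 1" and lower: "b + int i - int j = int (m + i) - 1 - int j"
    for i using assms by simp_all
  have "(-1)^i * of_nat ((2 * m + R - 1) choose (m - i)) * of_nat ((m + i) choose i)
      * binom_int (int (m + i + R) - 1) (int (m + i) - 1 - int j)
    = K * ((-1)^i * of_nat (m choose i) * binom_int (int m + int i) (int (Suc j)))" if "i \<le> m" for i
    using column_term_condB[OF that, of R j, where 'a='a] unfolding K_def by (simp add: mult_ac)
  then have "(\<Sum>i=0..m. (-1)^i * of_nat ((2 * m + R - 1) choose (m - i)) * of_nat ((m + i) choose i)
      * binom_int (b + int i + r - 1) (b + int i - int j))
    = (\<Sum>i=0..m. K * ((-1)^i * of_nat (m choose i) * binom_int (int m + int i) (int (Suc j))))"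
    unfolding upper lower by (intro sum.cong) simp_all
  also have "\<dots> = K * ((-1)^m * binom_int (int m) (1 + int j - int m))"
    by (simp add: sum_distrib_left[symmetric] binom_int_alternating_sum)
  finally show ?thesis by (simp only: K_def)
qed

lemma anti_window_condB:
  assumes "odd r" and "r > 0"
  shows "anti_window r (int m - 1) m (\<lambda>i. (-1)^i * of_nat (nat (2 * int m + r - 2) choose (m - i))
    * of_nat ((m + i) choose i) :: 'a::field_char_0)"
proof -
  define R where "R = nat (r - 1)"
  have r: "r = int R + 1" and N: "nat (2 * int m + r - 2) = 2 * m + R - 1"
    using \<open>r > 0\<close> by (simp_all add: R_def nat_diff_distrib)
  show ?thesis
    unfolding N
  proof (rule anti_windowI, goal_cases below above)
    case (below j)
    then show ?case unfolding column_sum_condB[OF diff_add_cancel r] by simp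
  next
    case (above j k)
    then have "odd (j + m + k)" using \<open>odd r\<close> by presburger
    then have sign: "(-1::'a)^j * (c * ((-1)^m * x)) = - ((-1)^k * (c * x))" for c x
      using minus_one_power_mult_odd[of j m k x] by (simp add: mult.left_commute)
    have jk: "1 + int j - int m = int k" and mk: "m + k = Suc j"
      using above by simp_all
    have "of_nat ((2 * m + R - 1) choose (m - k)) * of_nat ((m + k) choose k)
      = fact (2 * m + R - 1) * fact (Suc j) / (fact (R + j) * fact m * fact m) * (of_nat (m choose k) :: 'a)"
      if "k \<le> m"
    proof -
      have "binom_int (int (m + k + R) - 1) (int (m + k) - 1 - int j) = (1::'a)"
        and "binom_int (int (m + k)) (int (Suc j)) = (1::'a)"
        by (simp_all only: mk binom_int_of_nat) simp_all
      then show ?thesis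
        using column_term_condB[OF that, of R j, where 'a='a] by (simp only: mult_1_right)
    qed
    then show ?case
      unfolding column_sum_condB[OF diff_add_cancel r] sign jk using above
      by (auto simp: binomial_eq_0 mult_ac)
  qed
qed

lemma binomial_ratio_condC:
  assumes "Suc j \<le> n" and "n \<le> M"
  shows "of_nat ((M - Suc j) choose (n - Suc j)) / of_nat (M choose n)
    = of_nat (n choose Suc j) / (of_nat (M choose Suc j) :: 'a::field_char_0)"
proof -
  have "(M choose n) * (n choose Suc j) = (M choose Suc j) * ((M - Suc j) choose (n - Suc j))"
    using assms by (rule choose_mult)
  then have "(of_nat (M choose n) :: 'a) * of_nat (n choose Suc j)
      = of_nat (M choose Suc j) * of_nat ((M - Suc j) choose (n - Suc j))"
    by (metis of_nat_mult)
  moreover have "(M choose n) \<noteq> 0" and "(M choose Suc j) \<noteq> 0"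
    using assms by simp_all
  ultimately show ?thesis
    by (simp add: field_simps)
qed

lemma column_term_condC:
  assumes "n \<le> M"
  shows "(-1)^j * binom_int (int n - 1 - int M) (int n - 1 - int j) / of_nat (M choose n)
    = - ((-1)^n * binom_int (int n) (int (Suc j)) / (of_nat (M choose Suc j) :: 'a::field_char_0))"
proof (cases "Suc j \<le> n")
  case False
  then show ?thesis by (simp add: binomial_eq_0 del: of_nat_Suc)
next
  case True
  define e where "e = n - Suc j"
  have "binom_int (int n - 1 - int M) (int n - 1 - int j)
      = (-1)^e * (of_nat ((M - Suc j) choose e) :: 'a)"
  proof -
    have lower: "int n - 1 - int j = int e"
      using True by (simp add: e_def)
    have upper_int: "int e - (int n - 1 - int M) - 1 = int (M - Suc j)"
      using True assms by (simp add: e_def)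
    have upper: "of_nat e - of_int (int n - 1 - int M) - 1 = (of_nat (M - Suc j) :: 'a)"
      using arg_cong[OF upper_int, of "of_int :: int \<Rightarrow> 'a"] by simp
    have "binom_int (int n - 1 - int M) (int e) = (of_int (int n - 1 - int M) gchoose e :: 'a)"
      by (simp add: binom_int_def)
    also have "\<dots> = (-1)^e * (of_nat (M - Suc j) gchoose e)"
      by (simp only: gbinomial_negated_upper[of "of_int (int n - 1 - int M)"] upper)
    finally show ?thesis
      by (simp only: lower binomial_gbinomial)
  qed
  moreover have "(-1::'a)^j * (-1)^e = - ((-1)^n)"
    using True minus_one_power_mult_odd[of j e n 1] by (simp add: e_def)
  ultimately show ?thesis
    using binomial_ratio_condC[OF True assms, where 'a='a]
    by (simp add: e_def mult.assoc[symmetric] del: of_nat_Suc flip: times_divide_eq_right)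
qed

lemma column_sum_condC:
  assumes "b + 1 = int m" and "r = 1 - int M" and "2 * m \<le> M"
  shows "(-1)^j * (\<Sum>i=0..m. of_nat (m choose i) / of_nat (M choose (m + i))
      * binom_int (b + int i + r - 1) (b + int i - int j))
    = - (binom_int (int m) (1 + int j - int m) / (of_nat (M choose Suc j) :: 'a::field_char_0))"
proof -
  define c :: 'a where "c = (-1)^m / of_nat (M choose Suc j)"
  have upper: "b + int i + r - 1 = int (m + i) - 1 - int M" and lower: "b + int i - int j = int (m + i) - 1 - int j"
    for i using assms by simp_all
  have "(-1)^j * (of_nat (m choose i) / of_nat (M choose (m + i))
      * binom_int (int (m + i) - 1 - int M) (int (m + i) - 1 - int j))
    = - (c * ((-1)^i * of_nat (m choose i) * binom_int (int m + int i) (int (Suc j))))"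
    if "i \<le> m" for i
  proof -
    have "m + i \<le> M" using that assms(3) by simp
    have "(-1)^j * (of_nat (m choose i) / of_nat (M choose (m + i))
        * binom_int (int (m + i) - 1 - int M) (int (m + i) - 1 - int j))
      = of_nat (m choose i) * ((-1)^j * binom_int (int (m + i) - 1 - int M) (int (m + i) - 1 - int j)
        / of_nat (M choose (m + i)))"
      by (simp add: mult_ac)
    also have "\<dots> = of_nat (m choose i) * - ((-1)^(m + i) * binom_int (int (m + i)) (int (Suc j))
        / of_nat (M choose Suc j))"
      by (simp only: column_term_condC[OF \<open>m + i \<le> M\<close>])
    finally show ?thesis
      by (simp add: c_def power_add mult_ac)
  qed
  then have "(-1)^j * (\<Sum>i=0..m. of_nat (m choose i) / of_nat (M choose (m + i))
      * binom_int (b + int i + r - 1) (b + int i - int j))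
    = - (c * (\<Sum>i=0..m. (-1)^i * of_nat (m choose i) * binom_int (int m + int i) (int (Suc j))))"
    unfolding upper lower sum_distrib_left sum_negf[symmetric] by (intro sum.cong) simp_all
  also have "\<dots> = - (binom_int (int m) (1 + int j - int m) / of_nat (M choose Suc j))"
    by (simp add: binom_int_alternating_sum c_def)
  finally show ?thesis .
qed

lemma anti_window_condC:
  assumes "r < 0" and "2 * int m \<le> 1 - r"
  shows "anti_window r (int m - 1) m
    (\<lambda>i. of_nat (m choose i) / of_nat (nat (1 - r) choose (m + i)) :: 'a::field_char_0)"
proof -
  define M where "M = nat (1 - r)"
  have r: "r = 1 - int M" and mM: "2 * m \<le> M"
    using assms by (simp_all add: M_def)
  show ?thesis
    unfolding M_def[symmetric]
  proof (rule anti_windowI, goal_cases below above)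
    case (below j)
    then show ?case
      using column_sum_condC[OF diff_add_cancel r mM, of j, where 'a='a] by simp
  next
    case (above j k)
    then have jk: "1 + int j - int m = int k" and mk: "Suc j = m + k"
      by simp_all
    show ?case
      using column_sum_condC[OF diff_add_cancel r mM, of j, where 'a='a] unfolding jk mk
      by (simp add: binomial_eq_0)
  qed
qed

section \<open>Conditions (A)-(D) as windows\<close>

definition degree_window :: "int \<Rightarrow> int \<Rightarrow> nat \<Rightarrow> (nat \<Rightarrow> 'a::field_char_0) \<Rightarrow> bool" where
  "degree_window r b l w \<longleftrightarrow>
     (\<exists>m\<ge>1. even r \<and> b = int m - r \<and> l = m - 1 \<and> w = (\<lambda>i. (-1)^i * of_nat ((m - 1) choose i))) \<or>
     (\<exists>m\<ge>1. 0 < r \<and> odd r \<and> b = int m - 1 \<and> l = m \<and>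
        w = (\<lambda>i. (-1)^i * of_nat (nat (2 * int m + r - 2) choose (m - i)) * of_nat ((m + i) choose i))) \<or>
     (\<exists>m\<ge>1. r < 0 \<and> 2 * int m \<le> 1 - r \<and> b = int m - 1 \<and> l = m \<and>
        w = (\<lambda>i. of_nat (m choose i) / of_nat (nat (1 - r) choose (m + i)))) \<or>
     (\<exists>m\<ge>1. r < 0 \<and> odd r \<and> b = int m - r \<and> l = m \<and>
        w = (\<lambda>i. (-1)^i * of_nat (m choose i) * (of_nat (m + i) / of_nat m)))"

lemma degree_window_anti: "degree_window r b l w \<Longrightarrow> anti_window r b l w"
  unfolding degree_window_def
proof (elim disjE exE conjE)
  fix m :: nat assume "1 \<le> m" "even r" "b = int m - r" "l = m - 1"
    "w = (\<lambda>i. (-1)^i * of_nat ((m - 1) choose i))"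
  then show ?thesis using anti_window_condA[of r m] by simp
next
  fix m :: nat assume "1 \<le> m" "0 < r" "odd r" "b = int m - 1" "l = m"
    "w = (\<lambda>i. (-1)^i * of_nat (nat (2 * int m + r - 2) choose (m - i)) * of_nat ((m + i) choose i))"
  then show ?thesis using anti_window_condB[of r m] by simp
next
  fix m :: nat assume "1 \<le> m" "r < 0" "2 * int m \<le> 1 - r" "b = int m - 1" "l = m"
    "w = (\<lambda>i. of_nat (m choose i) / of_nat (nat (1 - r) choose (m + i)))"
  then show ?thesis using anti_window_condC[of r m] by simp
next
  fix m :: nat assume "1 \<le> m" "r < 0" "odd r" "b = int m - r" "l = m"
    "w = (\<lambda>i. (-1)^i * of_nat (m choose i) * (of_nat (m + i) / of_nat m))"
  then show ?thesis using anti_window_condD[of r m] by simp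
qed

lemma degree_window_condC_ending_at:
  assumes "odd n" and "r < 0" and "int n \<le> - r"
  shows "\<exists>b l w. degree_window r b l w \<and> b + int l = int n \<and> w l \<noteq> (0::'a::field_char_0)"
proof -
  define m where "m = Suc n div 2"
  have "2 * m = Suc n"
    using \<open>odd n\<close> by (simp add: m_def)
  then have "1 \<le> m" "2 * m = Suc n" "2 * int m \<le> 1 - r"
    using assms by linarith+
  moreover have "(nat (1 - r) choose (m + m)) \<noteq> 0"
    using \<open>2 * int m \<le> 1 - r\<close> by simp
  ultimately show ?thesis
    unfolding degree_window_def using \<open>r < 0\<close>
    by (intro exI[of _ "int m - 1"] exI[of _ m]) auto
qed

lemma degree_window_ending_at:
  assumes "odd n"
  shows "\<exists>b l w. degree_window r b l w \<and> b + int l = int n \<and> w l \<noteq> (0::'a::field_char_0)"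
proof -
  have "(even r \<and> 1 - r \<le> int n) \<or> (odd r \<and> r > 0) \<or> (r < 0 \<and> int n \<le> - r)
      \<or> (odd r \<and> r < 0 \<and> - r < int n)"
    using \<open>odd n\<close> by presburger
  then consider "even r" "1 - r \<le> int n" | "odd r" "r > 0" | "r < 0" "int n \<le> - r"
    | "odd r" "r < 0" "- r < int n"
    by blast
  then show ?thesis
  proof cases
    case 1
    define m where "m = nat ((int n + r + 1) div 2)"
    have "2 * ((int n + r + 1) div 2) = int n + r + 1"
      using 1 \<open>odd n\<close> by presburger
    then have "2 * int m = int n + r + 1" "1 \<le> m"
      using 1 unfolding m_def by linarith+
    then show ?thesis
      unfolding degree_window_def using 1
      by (intro exI[of _ "int m - r"] exI[of _ "m - 1"]) auto
  next
    case 2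
    define m where "m = Suc n div 2"
    have "2 * m = Suc n" "1 \<le> m"
      using \<open>odd n\<close> by (auto simp: m_def)
    then show ?thesis
      unfolding degree_window_def using 2
      by (intro exI[of _ "int m - 1"] exI[of _ m]) auto
  next
    case 3
    then show ?thesis using \<open>odd n\<close> by (intro degree_window_condC_ending_at)
  next
    case 4
    define m where "m = nat ((int n + r) div 2)"
    have "2 * ((int n + r) div 2) = int n + r"
      using 4 \<open>odd n\<close> by presburger
    then have "2 * int m = int n + r" "1 \<le> m"
      using 4 unfolding m_def by linarith+
    then show ?thesis
      unfolding degree_window_def using 4
      by (intro exI[of _ "int m - r"] exI[of _ m]) auto
  qed
qed

lemma ceiling_half_iff: "int m \<le> \<lceil>real_of_int (- r) / 2\<rceil> \<longleftrightarrow> 2 * int m \<le> 1 - r"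
proof -
  have "int m \<le> \<lceil>real_of_int (- r) / 2\<rceil> \<longleftrightarrow> real_of_int (2 * int m - 2) < real_of_int (- r)"
    by (simp add: le_ceiling_iff field_simps)
  also have "\<dots> \<longleftrightarrow> 2 * int m \<le> 1 - r"
    by (simp only: of_int_less_iff) linarith
  finally show ?thesis .
qed

lemma degree_conditions_iff_windows:
  fixes \<gamma> :: "nat \<Rightarrow> 'a::field_char_0"
  shows "degree_conditions d a \<gamma>
    \<longleftrightarrow> (\<forall>b l w. degree_window (- (a + int d)) b l w \<longrightarrow> window_sum b l w (Abs_fps \<gamma>) = 0)"
proof -
  define r where "r = - (a + int d)"
  have shift: "int m + int i - 1 = int m - 1 + int i" for m i :: nat
    by simp
  have "condA r \<gamma> m \<longleftrightarrow> window_sum (int m - r) (m - 1) (\<lambda>i. (-1)^i * of_nat ((m - 1) choose i)) (Abs_fps \<gamma>) = 0"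
    and "condB r \<gamma> m \<longleftrightarrow> window_sum (int m - 1) m
      (\<lambda>i. (-1)^i * of_nat (nat (2 * int m + r - 2) choose (m - i)) * of_nat ((m + i) choose i)) (Abs_fps \<gamma>) = 0"
    and "condC r \<gamma> m \<longleftrightarrow> window_sum (int m - 1) m
      (\<lambda>i. of_nat (m choose i) / of_nat (nat (1 - r) choose (m + i))) (Abs_fps \<gamma>) = 0"
    and "condD r \<gamma> m \<longleftrightarrow> window_sum (int m - r) m
      (\<lambda>i. (-1)^i * of_nat (m choose i) * (of_nat (m + i) / of_nat m)) (Abs_fps \<gamma>) = 0"
    for m by (simp_all only: condA_def condB_def condC_def condD_def window_sum_def shift fps_nth_Abs_fps
        mult.assoc)
  then show ?thesis
    unfolding degree_conditions_def Let_def r_def[symmetric] ceiling_half_iff degree_window_def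
    by blast
qed

lemma func_eq_iff_degree_conditions:
  fixes \<gamma> :: "nat \<Rightarrow> 'a::field_char_0"
  shows "func_eq d a \<gamma> \<longleftrightarrow> degree_conditions d a \<gamma>"
  unfolding func_eq_iff_reflect degree_conditions_iff_windows
  by (rule reflect_fixed_iff_windows[OF degree_window_anti degree_window_ending_at])

theorem theorem1p1:
  fixes d :: nat and a :: int
  shows "(\<forall>\<gamma> :: nat \<Rightarrow> rat. func_eq d a \<gamma> \<longleftrightarrow> degree_conditions d a \<gamma>) \<and>
         (\<forall>\<gamma> :: nat \<Rightarrow> real. func_eq d a \<gamma> \<longleftrightarrow> degree_conditions d a \<gamma>) \<and>
         (\<forall>\<gamma> :: nat \<Rightarrow> complex. func_eq d a \<gamma> \<longleftrightarrow> degree_conditions d a \<gamma>)"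
  by (intro conjI allI func_eq_iff_degree_conditions)

end
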